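(* Assume the walk's transition probabilities $p$ are non-reversible: there do not exist $m_V:\tilde V\to\mathbb{R}$, not identically zero, and $m_E:\tilde E\to\mathbb{R}$ with $p(a)m_V(o(a))=p(\bar a)m_V(t(a))=m_E(|a|)$ for all $a\in\tilde A$. Let $\Psi_\infty$ be the stationary state, and set $$\boldsymbol{\alpha}_{in}=[\Psi_\infty(e_1),\dots,\Psi_\infty(e_r)]^\top,\qquad \boldsymbol{\beta}_{out}=[\Psi_\infty(\bar e_1),\dots,\Psi_\infty(\bar e_r)]^\top.$$ Then $\boldsymbol{\beta}_{out}=-\boldsymbol{\alpha}_{in}$. Moreover: 1. $\sum_{a\in\tilde A:\,t(a)=u}\sqrt{p(\bar a)}\,\Psi_\infty(a)=0$ for every $u\in\tilde V$; 2. $\Psi_\infty(\bar a)=-\Psi_\infty(a)$ for every $a\in\tilde A$; 3. $\Psi_\infty$ is orthogonal to $\ker(1-\chi^*E_{PON}\chi)$. That is, for every $\varphi:\tilde A\to\mathbb{C}$ with $\varphi=\chi^*E_{PON}\chi\varphi$, we have $\sum_{a\in\tilde A}\overline{\varphi(a)}\Psi_\infty(a)=0$. Such $\varphi$ is supported on $A_0$, so the sum is finite.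
   Context: **Symmetric directed graphs.** A symmetric directed graph $(V,A)$ has the following structure. - Each arc $a$ has an origin $o(a)$ and a terminus $t(a)$. - Each arc $a$ has an inverse arc $\bar a$ with $o(\bar a)=t(a)$, $t(\bar a)=o(a)$ and $\bar{\bar a}=a$. - $|a|=|\bar a|$ denotes the undirected edge. **The tailed graph.** - Let $G_0=(V_0,A_0)$ be a finite symmetric directed graph and let $r\ge1$. - For $j=1,\dots,r$, let $\mathbb{P}_j$ be a semi-infinite path ("tail") with vertices $v^j_0,v^j_1,\dots$ and arcs $A(\mathbb{P}_j)$ in both directions between consecutive vertices. - The end vertex is $o(\mathbb{P}_j)=v^j_0$. We require $V(\mathbb{P}_j)\cap V_0=\{o(\mathbb{P}_j)\}$, and distinct tails share no vertices outside $V_0$. - Let $\tilde G=(\tilde V,\tilde A)=G_0\cup\bigcup_j\mathbb{P}_j$, with undirected edge set $\tilde E$. - Let $e_j$ be the arc from $v^j_1$ to $o(\mathbb{P}_j)$. **Transition probabilities.** Let $p:\tilde A\to(0,1]$ satisfy: - $\sum_{o(a)=u}p(a)=1$ for all $u\in\tilde V$; - $p(a)=1/2$ on $\bigcup_jA(\mathbb{P}_j)\setminus\{\bar e_1,\dots,\bar e_r\}$. **Szegedy walk.** For $\Psi:\tilde A\to\mathbb{C}$, $$(U\Psi)(a)=\sum_{b:\,t(b)=o(a)}\big(2\sqrt{p(a)p(\bar b)}-\delta_{\bar a,b}\big)\Psi(b).$$ **Restriction operators.** - $\chi:\mathbb{C}^{\tilde A}\to\mathbb{C}^{A_0}$ is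 restriction to $A_0$. - $\chi^*$ is extension by zero. - $E_{PON}=\chi U\chi^*$, the restriction of $U$ to $A_0$. **Initial state and stationary state.** Fix $\alpha_1,\dots,\alpha_r\in\mathbb{C}$. - $\Psi_0(a)=\alpha_j$ for $a\in A(\mathbb{P}_j)$ with $\mathrm{dist}(o(\mathbb{P}_j),t(a))<\mathrm{dist}(o(\mathbb{P}_j),o(a))$. - $\Psi_0(a)=0$ otherwise. - Set $\Psi_{n+1}=U\Psi_n$. - The pointwise limit $\Psi_\infty=\lim_n\Psi_n$ exists (known fact) and is called the stationary state. *)

theory Defs
  imports "HOL-Analysis.Analysis"
begin

text \<open>A symmetric digraph is given by an arc set A with origin o, terminus t
and inverse bar.  The Szegedy evolution operator U (acting on functions on
arcs; only values on A matter).\<close>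

definition szegedy ::
  "'b set \<Rightarrow> ('b \<Rightarrow> 'w) \<Rightarrow> ('b \<Rightarrow> 'w) \<Rightarrow> ('b \<Rightarrow> 'b) \<Rightarrow> ('b \<Rightarrow> real)
   \<Rightarrow> ('b \<Rightarrow> complex) \<Rightarrow> ('b \<Rightarrow> complex)" where
  "szegedy A org trm bar p \<Psi> a =
     (\<Sum>b\<in>{b\<in>A. trm b = org a}.
        (complex_of_real (2 * sqrt (p a * p (bar b))) - (if b = bar a then 1 else 0)) * \<Psi> b)"

text \<open>chi^* chi: restriction to B followed by extension by zero.\<close>
definition cut :: "'b set \<Rightarrow> ('b \<Rightarrow> complex) \<Rightarrow> ('b \<Rightarrow> complex)" where
  "cut B \<Psi> a = (if a \<in> B then \<Psi> a else 0)"

text \<open>Reversibility: m_V on vertices (not identically zero on V) and m_E on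
undirected edges |a| = {a, bar a}.\<close>
definition reversible ::
  "'w set \<Rightarrow> 'b set \<Rightarrow> ('b \<Rightarrow> 'w) \<Rightarrow> ('b \<Rightarrow> 'w) \<Rightarrow> ('b \<Rightarrow> 'b) \<Rightarrow> ('b \<Rightarrow> real) \<Rightarrow> bool" where
  "reversible V A org trm bar p \<longleftrightarrow>
     (\<exists>mV :: 'w \<Rightarrow> real. \<exists>mE :: 'b set \<Rightarrow> real.
        (\<exists>v\<in>V. mV v \<noteq> 0) \<and>
        (\<forall>a\<in>A. p a * mV (org a) = p (bar a) * mV (trm a) \<and>
                p (bar a) * mV (trm a) = mE {a, bar a}))"

text \<open>Vertices: V v for v in V0, and T j k = v^j_k (k >= 1) on tail j.
Tails are indexed by j = 0..r-1; tail j is attached at att j = o(P_j) = v^j_0.\<close>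
datatype 'v tvert = V 'v | T nat nat

text \<open>Arcs: Old a for a in A0; Out j k : v^j_k -> v^j_(k+1);
In j k : v^j_(k+1) -> v^j_k.  Thus e_j = In j 0 and its inverse is Out j 0.\<close>
datatype 'a tarc = Old 'a | Out nat nat | In nat nat

definition tv :: "(nat \<Rightarrow> 'v) \<Rightarrow> nat \<Rightarrow> nat \<Rightarrow> 'v tvert" where
  "tv att j k = (if k = 0 then V (att j) else T j k)"

definition tverts :: "'v set \<Rightarrow> nat \<Rightarrow> 'v tvert set" where
  "tverts V0 r = V ` V0 \<union> {T j k | j k. j < r \<and> 1 \<le> k}"

definition tarcs :: "'a set \<Rightarrow> nat \<Rightarrow> 'a tarc set" where
  "tarcs A0 r = Old ` A0 \<union> {Out j k | j k. j < r} \<union> {In j k | j k. j < r}"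

fun torig :: "('a \<Rightarrow> 'v) \<Rightarrow> (nat \<Rightarrow> 'v) \<Rightarrow> 'a tarc \<Rightarrow> 'v tvert" where
  "torig o0 att (Old a) = V (o0 a)"
| "torig o0 att (Out j k) = tv att j k"
| "torig o0 att (In j k) = tv att j (Suc k)"

fun tterm :: "('a \<Rightarrow> 'v) \<Rightarrow> (nat \<Rightarrow> 'v) \<Rightarrow> 'a tarc \<Rightarrow> 'v tvert" where
  "tterm t0 att (Old a) = V (t0 a)"
| "tterm t0 att (Out j k) = tv att j (Suc k)"
| "tterm t0 att (In j k) = tv att j k"

fun tinv :: "('a \<Rightarrow> 'a) \<Rightarrow> 'a tarc \<Rightarrow> 'a tarc" where
  "tinv inv0 (Old a) = Old (inv0 a)"
| "tinv inv0 (Out j k) = In j k"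
| "tinv inv0 (In j k) = Out j k"

fun Psi0 :: "(nat \<Rightarrow> complex) \<Rightarrow> 'a tarc \<Rightarrow> complex" where
  "Psi0 \<alpha> (Old a) = 0"
| "Psi0 \<alpha> (Out j k) = 0"
| "Psi0 \<alpha> (In j k) = \<alpha> j"

end

theory Submission
  imports Defs
begin

(* A fixed point Psi of U satisfies Psi(a) + Psi(bar a) = 2 sqrt(p(a)) (d_A Psi)(o(a))
   = 2 sqrt(p(bar a)) (d_A Psi)(t(a)), so m_V = |d_A Psi|^2 solves the detailed balance
   equations; non-reversibility forces d_A Psi = 0 and hence Psi(bar a) = - Psi(a).  The
   stationary state is such a fixed point.
   A fixed vector phi of chi^* E_PON chi is supported on the finite set A_0, and since U
   preserves the norm vertex by vertex, no mass of U phi can leave A_0: phi is a fixed point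
   of U itself.  Being antisymmetric with d_A phi = 0, it satisfies <phi, U Psi> = <phi, Psi>
   for every Psi, so <phi, Psi_n> = <phi, Psi_0> = 0 for all n, as Psi_0 vanishes on A_0. *)

locale szegedy_walk =
  fixes V :: "'w set" and A :: "'b set"
    and org trm :: "'b \<Rightarrow> 'w" and bar :: "'b \<Rightarrow> 'b"
    and p :: "'b \<Rightarrow> real"
  assumes bar_in: "a \<in> A \<Longrightarrow> bar a \<in> A"
    and bar_bar: "a \<in> A \<Longrightarrow> bar (bar a) = a"
    and org_bar: "a \<in> A \<Longrightarrow> org (bar a) = trm a"
    and org_in: "a \<in> A \<Longrightarrow> org a \<in> V"
    and p_pos: "a \<in> A \<Longrightarrow> 0 < p a"
    and p_stochastic: "u \<in> V \<Longrightarrow> (\<Sum>a\<in>{a\<in>A. org a = u}. p a) = 1"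
begin

abbreviation U :: "('b \<Rightarrow> complex) \<Rightarrow> 'b \<Rightarrow> complex" where
  "U \<equiv> szegedy A org trm bar p"

abbreviation out_arcs :: "'w \<Rightarrow> 'b set" where
  "out_arcs u \<equiv> {a\<in>A. org a = u}"

abbreviation in_arcs :: "'w \<Rightarrow> 'b set" where
  "in_arcs u \<equiv> {a\<in>A. trm a = u}"

lemma trm_bar: "a \<in> A \<Longrightarrow> trm (bar a) = org a"
  by (metis bar_bar bar_in org_bar)

lemma trm_in: "a \<in> A \<Longrightarrow> trm a \<in> V"
  by (metis bar_in org_bar org_in)

lemma bar_image_out_arcs: "bar ` out_arcs u = in_arcs u"
proof
  show "bar ` out_arcs u \<subseteq> in_arcs u"
    using bar_in trm_bar by auto
  show "in_arcs u \<subseteq> bar ` out_arcs u"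
  proof
    fix b assume "b \<in> in_arcs u"
    then have "bar b \<in> out_arcs u" and "b = bar (bar b)"
      using bar_in org_bar bar_bar by auto
    then show "b \<in> bar ` out_arcs u"
      by blast
  qed
qed

lemma inj_on_bar: "inj_on bar A"
  by (metis bar_bar inj_onI)

lemma sum_out_arcs_bar: "(\<Sum>a\<in>out_arcs u. h (bar a)) = (\<Sum>b\<in>in_arcs u. h b)"
  using sum.reindex[OF inj_on_subset[OF inj_on_bar], of "out_arcs u" h] bar_image_out_arcs
  by simp

text \<open>Stochasticity forces local finiteness: a sum over an infinite set is 0, not 1.\<close>
lemma finite_out_arcs: "finite (out_arcs u)"
proof (cases "u \<in> V")
  case True
  then have "sum p (out_arcs u) \<noteq> 0"
    using p_stochastic by simp
  then show ?thesis
    using sum.infinite by blast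
next
  case False
  then have "out_arcs u = {}"
    using org_in by auto
  then show ?thesis
    by (metis finite.emptyI)
qed

lemma finite_in_arcs: "finite (in_arcs u)"
  using finite_imageI[OF finite_out_arcs] bar_image_out_arcs by metis

lemma arcs_preimage_eq_UN: "{a\<in>A. f a \<in> W} = (\<Union>u\<in>W. {a\<in>A. f a = u})"
  by auto

lemma finite_arcs_preimage:
  assumes "finite W" and "\<And>u. finite {a\<in>A. f a = u}"
  shows "finite {a\<in>A. f a \<in> W}"
  unfolding arcs_preimage_eq_UN using assms by blast

lemma sum_arcs_group:
  assumes "finite W" and "\<And>u. finite {a\<in>A. f a = u}"
  shows "(\<Sum>a\<in>{a\<in>A. f a \<in> W}. h a) = (\<Sum>u\<in>W. \<Sum>a\<in>{a\<in>A. f a = u}. h a)"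
  unfolding arcs_preimage_eq_UN by (rule sum.UNION_disjoint) (use assms in auto)

text \<open>The map \<open>d\<^sub>A\<close> of the paper, in terms of which \<open>U = S (2 d\<^sub>A\<^sup>* d\<^sub>A - 1)\<close>
  with \<open>S\<close> the arc reversal.\<close>
definition dA :: "('b \<Rightarrow> complex) \<Rightarrow> 'w \<Rightarrow> complex" where
  "dA \<Psi> u = (\<Sum>b\<in>in_arcs u. of_real (sqrt (p (bar b))) * \<Psi> b)"

lemma szegedy_eq:
  assumes "a \<in> A"
  shows "U \<Psi> a = 2 * of_real (sqrt (p a)) * dA \<Psi> (org a) - \<Psi> (bar a)"
proof -
  let ?S = "in_arcs (org a)"
  have "bar a \<in> ?S"
    using assms bar_in trm_bar by auto
  moreover have "(\<lambda>b. (if b = bar a then 1 else 0) * \<Psi> b) = (\<lambda>b. if b = bar a then \<Psi> b else 0)"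
    by auto
  ultimately have reflection: "(\<Sum>b\<in>?S. (if b = bar a then 1 else 0) * \<Psi> b) = \<Psi> (bar a)"
    using sum.delta[OF finite_in_arcs[of "org a"], of "bar a" \<Psi>] by (simp only: if_True)
  have "(\<Sum>b\<in>?S. of_real (2 * sqrt (p a * p (bar b))) * \<Psi> b)
      = 2 * of_real (sqrt (p a)) * dA \<Psi> (org a)"
    unfolding dA_def sum_distrib_left by (rule sum.cong) (auto simp: real_sqrt_mult)
  with reflection show ?thesis
    unfolding szegedy_def by (simp add: sum_subtractf algebra_simps)
qed

lemma norm_szegedy_at_vertex:
  assumes "u \<in> V"
  shows "(\<Sum>a\<in>out_arcs u. (cmod (U \<Psi> a))\<^sup>2) = (\<Sum>b\<in>in_arcs u. (cmod (\<Psi> b))\<^sup>2)"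
proof -
  define G where "G = dA \<Psi> u"
  define s where "s a = sqrt (p a)" for a
  have "(\<Sum>a\<in>out_arcs u. of_real (s a) * \<Psi> (bar a))
      = (\<Sum>a\<in>out_arcs u. of_real (sqrt (p (bar (bar a)))) * \<Psi> (bar a))"
    by (rule sum.cong) (auto simp: s_def bar_bar)
  then have amp: "(\<Sum>a\<in>out_arcs u. of_real (s a) * \<Psi> (bar a)) = G"
    unfolding G_def dA_def using sum_out_arcs_bar[of "\<lambda>b. of_real (sqrt (p (bar b))) * \<Psi> b" u]
    by simp
  have expand: "(cmod (U \<Psi> a))\<^sup>2
      = 4 * p a * (cmod G)\<^sup>2 - 4 * Re (cnj G * (of_real (s a) * \<Psi> (bar a))) + (cmod (\<Psi> (bar a)))\<^sup>2"
    if "a \<in> out_arcs u" for a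
  proof -
    have "p a = s a * s a"
      using p_pos that by (simp add: s_def less_imp_le)
    moreover have "U \<Psi> a = 2 * of_real (s a) * G - \<Psi> (bar a)"
      using that szegedy_eq by (simp add: G_def s_def)
    ultimately show ?thesis
      unfolding cmod_power2 by (simp only:) (simp add: power2_eq_square algebra_simps)
  qed
  have "(\<Sum>a\<in>out_arcs u. (cmod (U \<Psi> a))\<^sup>2)
      = (\<Sum>a\<in>out_arcs u. 4 * p a * (cmod G)\<^sup>2 - 4 * Re (cnj G * (of_real (s a) * \<Psi> (bar a)))
          + (cmod (\<Psi> (bar a)))\<^sup>2)"
    by (rule sum.cong[OF refl expand])
  also have "\<dots> = 4 * (\<Sum>a\<in>out_arcs u. p a) * (cmod G)\<^sup>2
        - 4 * Re (cnj G * (\<Sum>a\<in>out_arcs u. of_real (s a) * \<Psi> (bar a)))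
        + (\<Sum>a\<in>out_arcs u. (cmod (\<Psi> (bar a)))\<^sup>2)"
    by (simp only: sum.distrib sum_subtractf sum_distrib_left[symmetric]
        sum_distrib_right[symmetric] Re_sum[symmetric])
  also have "\<dots> = (\<Sum>b\<in>in_arcs u. (cmod (\<Psi> b))\<^sup>2)"
    using p_stochastic[OF assms] amp sum_out_arcs_bar[of "\<lambda>b. (cmod (\<Psi> b))\<^sup>2" u]
    unfolding cmod_power2 by (simp add: power2_eq_square)
  finally show ?thesis .
qed

lemma balanced_eq_zero:
  fixes g :: "'w \<Rightarrow> complex"
  assumes nonrev: "\<not> reversible V A org trm bar p"
    and balanced: "\<And>a. a \<in> A \<Longrightarrow>
      of_real (sqrt (p a)) * g (org a) = of_real (sqrt (p (bar a))) * g (trm a)"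
    and "u \<in> V"
  shows "g u = 0"
proof (rule ccontr)
  assume "g u \<noteq> 0"
  define mV where "mV w = (cmod (g w))\<^sup>2" for w
  have detailed_balance: "p a * mV (org a) = p (bar a) * mV (trm a)" if "a \<in> A" for a
  proof -
    have "(cmod (of_real (sqrt (p a)) * g (org a)))\<^sup>2
        = (cmod (of_real (sqrt (p (bar a))) * g (trm a)))\<^sup>2"
      using balanced[OF that] by simp
    then show ?thesis
      using p_pos that bar_in by (simp add: mV_def norm_mult power_mult_distrib less_imp_le)
  qed
  define mE where "mE s = the_elem ((\<lambda>a. p a * mV (org a)) ` s)" for s
  have "p (bar a) * mV (trm a) = mE {a, bar a}" if "a \<in> A" for a
    using detailed_balance[OF that] org_bar[OF that] by (simp add: mE_def)
  then have "reversible V A org trm bar p"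
    unfolding reversible_def using detailed_balance \<open>u \<in> V\<close> \<open>g u \<noteq> 0\<close>
    by (auto simp: mV_def intro!: exI[of _ mV] exI[of _ mE])
  with nonrev show False ..
qed

lemma fixed_point_balanced:
  assumes fixed: "\<And>a. a \<in> A \<Longrightarrow> U \<Psi> a = \<Psi> a" and "a \<in> A"
  shows "of_real (sqrt (p a)) * dA \<Psi> (org a) = of_real (sqrt (p (bar a))) * dA \<Psi> (trm a)"
proof -
  have "\<Psi> a + \<Psi> (bar a) = 2 * of_real (sqrt (p a)) * dA \<Psi> (org a)"
    using fixed[OF \<open>a \<in> A\<close>] szegedy_eq[OF \<open>a \<in> A\<close>] by (simp add: algebra_simps)
  moreover have "\<Psi> (bar a) + \<Psi> a = 2 * of_real (sqrt (p (bar a))) * dA \<Psi> (trm a)"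
    using fixed[OF bar_in] szegedy_eq[OF bar_in] \<open>a \<in> A\<close> by (simp add: org_bar bar_bar algebra_simps)
  ultimately show ?thesis
    by (simp add: add.commute)
qed

lemma fixed_point_dA_eq_zero:
  assumes "\<not> reversible V A org trm bar p" and "\<And>a. a \<in> A \<Longrightarrow> U \<Psi> a = \<Psi> a" and "u \<in> V"
  shows "dA \<Psi> u = 0"
  using balanced_eq_zero fixed_point_balanced assms by blast

lemma fixed_point_antisym:
  assumes nonrev: "\<not> reversible V A org trm bar p"
    and fixed: "\<And>a. a \<in> A \<Longrightarrow> U \<Psi> a = \<Psi> a" and "a \<in> A"
  shows "\<Psi> (bar a) = - \<Psi> a"
  using szegedy_eq[OF \<open>a \<in> A\<close>, of \<Psi>] fixed[OF \<open>a \<in> A\<close>]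
    fixed_point_dA_eq_zero[OF nonrev fixed org_in[OF \<open>a \<in> A\<close>]]
  by simp

lemma tendsto_szegedy:
  assumes "\<And>b. (\<lambda>n. \<Phi> n b) \<longlonglongrightarrow> \<Psi> b"
  shows "(\<lambda>n. U (\<Phi> n) a) \<longlonglongrightarrow> U \<Psi> a"
  unfolding szegedy_def by (intro tendsto_sum tendsto_mult_left assms)

lemma fixed_point_of_limit:
  assumes lim: "\<And>a. (\<lambda>n. (U ^^ n) \<Psi>0 a) \<longlonglongrightarrow> \<Psi> a"
  shows "U \<Psi> a = \<Psi> a"
proof -
  have "(\<lambda>n. U ((U ^^ n) \<Psi>0) a) \<longlonglongrightarrow> U \<Psi> a"
    using tendsto_szegedy[OF lim] .
  moreover have "(\<lambda>n. U ((U ^^ n) \<Psi>0) a) \<longlonglongrightarrow> \<Psi> a"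
    using LIMSEQ_Suc[OF lim[of a]] by simp
  ultimately show ?thesis
    by (rule LIMSEQ_unique)
qed

lemma szegedy_eq_zero_off_support:
  assumes "\<And>b. b \<in> A \<Longrightarrow> b \<notin> B \<Longrightarrow> \<psi> b = 0" and "org a \<notin> trm ` B"
  shows "U \<psi> a = 0"
  unfolding szegedy_def
proof (rule sum.neutral, rule ballI)
  fix b assume "b \<in> {b\<in>A. trm b = org a}"
  then have "\<psi> b = 0"
    using assms by force
  then show "(of_real (2 * sqrt (p a * p (bar b))) - (if b = bar a then 1 else 0)) * \<psi> b = 0"
    by simp
qed

lemma norm_szegedy_finite_support:
  assumes "finite B" "B \<subseteq> A" and zero: "\<And>b. b \<in> A \<Longrightarrow> b \<notin> B \<Longrightarrow> \<psi> b = 0"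
  shows "(\<Sum>a\<in>{a\<in>A. org a \<in> trm ` B}. (cmod (U \<psi> a))\<^sup>2) = (\<Sum>b\<in>B. (cmod (\<psi> b))\<^sup>2)"
proof -
  have "(\<Sum>a\<in>{a\<in>A. org a \<in> trm ` B}. (cmod (U \<psi> a))\<^sup>2)
      = (\<Sum>u\<in>trm ` B. \<Sum>a\<in>out_arcs u. (cmod (U \<psi> a))\<^sup>2)"
    using \<open>finite B\<close> finite_out_arcs by (rule sum_arcs_group[OF finite_imageI])
  also have "\<dots> = (\<Sum>u\<in>trm ` B. \<Sum>b\<in>in_arcs u. (cmod (\<psi> b))\<^sup>2)"
    using \<open>B \<subseteq> A\<close> trm_in by (intro sum.cong norm_szegedy_at_vertex) auto
  also have "\<dots> = (\<Sum>b\<in>{b\<in>A. trm b \<in> trm ` B}. (cmod (\<psi> b))\<^sup>2)"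
    using \<open>finite B\<close> finite_in_arcs by (rule sum_arcs_group[OF finite_imageI, symmetric])
  also have "\<dots> = (\<Sum>b\<in>B. (cmod (\<psi> b))\<^sup>2)"
    using \<open>finite B\<close> \<open>B \<subseteq> A\<close> zero finite_in_arcs
    by (intro sum.mono_neutral_right finite_arcs_preimage finite_imageI) auto
  finally show ?thesis .
qed

text \<open>\<open>U\<close> preserves the norm and already reproduces all of \<open>\<psi>\<close> on \<open>B\<close>, so no mass of
  \<open>U \<psi>\<close> is left outside \<open>B\<close>.\<close>
lemma szegedy_fixed_if_fixed_on_support:
  assumes "finite B" "B \<subseteq> A" and zero: "\<And>b. b \<in> A \<Longrightarrow> b \<notin> B \<Longrightarrow> \<psi> b = 0"
    and fixed_on: "\<And>a. a \<in> B \<Longrightarrow> U \<psi> a = \<psi> a" and "a \<in> A"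
  shows "U \<psi> a = \<psi> a"
proof (cases "a \<in> B")
  case False
  let ?S = "{a\<in>A. org a \<in> trm ` B}"
  have off: "U \<psi> c = 0" if "org c \<notin> trm ` B" for c
    by (rule szegedy_eq_zero_off_support[where B = B, OF zero that])
  have "finite ?S"
    using \<open>finite B\<close> finite_out_arcs by (intro finite_arcs_preimage finite_imageI)
  have "(\<Sum>c\<in>?S \<union> B. (cmod (U \<psi> c))\<^sup>2) = (\<Sum>c\<in>?S. (cmod (U \<psi> c))\<^sup>2)"
    using \<open>finite ?S\<close> \<open>finite B\<close> \<open>B \<subseteq> A\<close> off by (intro sum.mono_neutral_right) auto
  also have "\<dots> = (\<Sum>c\<in>B. (cmod (U \<psi> c))\<^sup>2)"
    using norm_szegedy_finite_support[OF assms(1-3)] fixed_on by simp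
  finally have "(\<Sum>c\<in>(?S \<union> B) - B. (cmod (U \<psi> c))\<^sup>2) = 0"
    using sum.subset_diff[of B "?S \<union> B" "\<lambda>c. (cmod (U \<psi> c))\<^sup>2"] \<open>finite ?S\<close> \<open>finite B\<close>
    by simp
  moreover have "finite ((?S \<union> B) - B)"
    using \<open>finite ?S\<close> \<open>finite B\<close> by auto
  ultimately have "\<forall>c\<in>(?S \<union> B) - B. (cmod (U \<psi> c))\<^sup>2 = 0"
    by (simp add: sum_nonneg_eq_0_iff)
  then have "U \<psi> a = 0"
    using off \<open>a \<in> A\<close> \<open>a \<notin> B\<close> by (cases "org a \<in> trm ` B") auto
  then show ?thesis
    using zero \<open>a \<in> A\<close> \<open>a \<notin> B\<close> by simp
qed (use fixed_on in simp)

lemma out_amplitude_antisym: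
  assumes antisym: "\<And>a. a \<in> A \<Longrightarrow> \<psi> (bar a) = - \<psi> a"
  shows "(\<Sum>a\<in>out_arcs u. of_real (sqrt (p a)) * \<psi> a) = - dA \<psi> u"
proof -
  have "(\<Sum>a\<in>out_arcs u. of_real (sqrt (p a)) * \<psi> a)
      = (\<Sum>a\<in>out_arcs u. - (of_real (sqrt (p (bar (bar a)))) * \<psi> (bar a)))"
    by (rule sum.cong) (auto simp: antisym bar_bar)
  also have "\<dots> = - dA \<psi> u"
    unfolding dA_def sum_negf
    using sum_out_arcs_bar[of "\<lambda>b. of_real (sqrt (p (bar b))) * \<psi> b" u] by simp
  finally show ?thesis .
qed

lemma inner_szegedy_antisym:
  assumes "finite B" "B \<subseteq> A" "bar ` B = B"
    and zero: "\<And>b. b \<in> A \<Longrightarrow> b \<notin> B \<Longrightarrow> \<psi> b = 0"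
    and antisym: "\<And>a. a \<in> A \<Longrightarrow> \<psi> (bar a) = - \<psi> a"
    and dA_zero: "\<And>u. u \<in> V \<Longrightarrow> dA \<psi> u = 0"
  shows "(\<Sum>a\<in>B. cnj (\<psi> a) * U \<Psi> a) = (\<Sum>a\<in>B. cnj (\<psi> a) * \<Psi> a)"
proof -
  let ?s = "\<lambda>a. of_real (sqrt (p a)) :: complex"
  have out_zero: "(\<Sum>a\<in>{a\<in>B. org a = u}. ?s a * \<psi> a) = 0" if "u \<in> org ` B" for u
  proof -
    have "(\<Sum>a\<in>{a\<in>B. org a = u}. ?s a * \<psi> a) = (\<Sum>a\<in>out_arcs u. ?s a * \<psi> a)"
      using \<open>B \<subseteq> A\<close> zero finite_out_arcs by (intro sum.mono_neutral_left) auto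
    also have "\<dots> = 0"
      using out_amplitude_antisym[where \<psi> = \<psi>, OF antisym] dA_zero that \<open>B \<subseteq> A\<close> org_in by auto
    finally show ?thesis .
  qed
  have "(\<Sum>a\<in>B. cnj (\<psi> a) * ?s a * dA \<Psi> (org a))
      = (\<Sum>u\<in>org ` B. \<Sum>a\<in>{a\<in>B. org a = u}. cnj (\<psi> a) * ?s a * dA \<Psi> (org a))"
    using \<open>finite B\<close> by (intro sum.group[symmetric]) auto
  also have "\<dots> = (\<Sum>u\<in>org ` B. dA \<Psi> u * cnj (\<Sum>a\<in>{a\<in>B. org a = u}. ?s a * \<psi> a))"
    by (intro sum.cong refl) (auto simp: sum_distrib_left algebra_simps intro!: sum.cong)
  also have "\<dots> = 0"
    by (simp add: out_zero)
  finally have incoming: "(\<Sum>a\<in>B. cnj (\<psi> a) * ?s a * dA \<Psi> (org a)) = 0" .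
  have "(\<Sum>a\<in>B. cnj (\<psi> a) * \<Psi> (bar a)) = (\<Sum>b\<in>B. cnj (\<psi> (bar b)) * \<Psi> b)"
    using \<open>B \<subseteq> A\<close> \<open>bar ` B = B\<close> bar_bar
    by (intro sum.reindex_bij_witness[of _ bar bar]) auto
  also have "\<dots> = - (\<Sum>b\<in>B. cnj (\<psi> b) * \<Psi> b)"
    using \<open>B \<subseteq> A\<close> antisym by (auto simp: sum_negf[symmetric] intro!: sum.cong)
  finally have reflected: "(\<Sum>a\<in>B. cnj (\<psi> a) * \<Psi> (bar a)) = - (\<Sum>b\<in>B. cnj (\<psi> b) * \<Psi> b)" .
  have "(\<Sum>a\<in>B. cnj (\<psi> a) * U \<Psi> a)
      = (\<Sum>a\<in>B. 2 * (cnj (\<psi> a) * ?s a * dA \<Psi> (org a)) - cnj (\<psi> a) * \<Psi> (bar a))"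
    using \<open>B \<subseteq> A\<close> by (intro sum.cong refl) (auto simp: szegedy_eq algebra_simps)
  also have "\<dots> = 2 * (\<Sum>a\<in>B. cnj (\<psi> a) * ?s a * dA \<Psi> (org a))
      - (\<Sum>a\<in>B. cnj (\<psi> a) * \<Psi> (bar a))"
    by (simp add: sum_subtractf sum_distrib_left)
  finally show ?thesis
    using incoming reflected by simp
qed

lemma limit_orthogonal_to_restricted_fixed:
  assumes nonrev: "\<not> reversible V A org trm bar p"
    and "finite B" "B \<subseteq> A" "bar ` B = B"
    and init_zero: "\<And>a. a \<in> B \<Longrightarrow> \<Psi>0 a = 0"
    and lim: "\<And>a. (\<lambda>n. (U ^^ n) \<Psi>0 a) \<longlonglongrightarrow> \<Psi> a"
    and restricted_fixed: "\<forall>a\<in>A. \<phi> a = cut B (U (cut B \<phi>)) a"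
  shows "(\<Sum>\<^sub>\<infinity>a\<in>A. cnj (\<phi> a) * \<Psi> a) = 0"
proof -
  define \<psi> where "\<psi> = cut B \<phi>"
  have zero: "\<psi> b = 0" if "b \<notin> B" for b
    using that by (simp add: \<psi>_def cut_def)
  have \<phi>_eq: "\<phi> a = \<psi> a" if "a \<in> A" for a
    using restricted_fixed that by (simp add: \<psi>_def cut_def)
  have "U \<psi> a = \<psi> a" if "a \<in> B" for a
    using restricted_fixed that \<open>B \<subseteq> A\<close> by (auto simp: \<psi>_def cut_def)
  then have fixed: "U \<psi> a = \<psi> a" if "a \<in> A" for a
    using szegedy_fixed_if_fixed_on_support \<open>finite B\<close> \<open>B \<subseteq> A\<close> zero that by blast
  have invariant: "(\<Sum>a\<in>B. cnj (\<psi> a) * U \<Phi> a) = (\<Sum>a\<in>B. cnj (\<psi> a) * \<Phi> a)" for \<Phi>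
    using assms(2-4) zero fixed_point_antisym[OF nonrev fixed] fixed_point_dA_eq_zero[OF nonrev fixed]
    by (rule inner_szegedy_antisym)
  have "(\<Sum>a\<in>B. cnj (\<psi> a) * (U ^^ n) \<Psi>0 a) = 0" for n
    by (induction n) (simp_all add: invariant init_zero)
  moreover have "(\<lambda>n. \<Sum>a\<in>B. cnj (\<psi> a) * (U ^^ n) \<Psi>0 a) \<longlonglongrightarrow> (\<Sum>a\<in>B. cnj (\<psi> a) * \<Psi> a)"
    by (intro tendsto_sum tendsto_mult_left lim)
  ultimately have "(\<Sum>a\<in>B. cnj (\<psi> a) * \<Psi> a) = 0"
    by (simp add: LIMSEQ_const_iff)
  moreover have "(\<Sum>\<^sub>\<infinity>a\<in>A. cnj (\<phi> a) * \<Psi> a) = (\<Sum>\<^sub>\<infinity>a\<in>B. cnj (\<psi> a) * \<Psi> a)"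
    using \<open>B \<subseteq> A\<close> zero \<phi>_eq by (intro infsum_cong_neutral) auto
  ultimately show ?thesis
    using \<open>finite B\<close> by simp
qed

end

lemma szegedy_walk_tailed:
  assumes G0_orig: "\<forall>a\<in>A0. o0 a \<in> V0"
    and G0_inv: "\<forall>a\<in>A0. inv0 a \<in> A0 \<and> inv0 (inv0 a) = a \<and> o0 (inv0 a) = t0 a"
    and att_in: "\<forall>j<r. att j \<in> V0"
    and p_pos: "\<forall>a\<in>tarcs A0 r. 0 < p a"
    and p_stoch: "\<forall>u\<in>tverts V0 r. (\<Sum>a\<in>{a\<in>tarcs A0 r. torig o0 att a = u}. p a) = 1"
  shows "szegedy_walk (tverts V0 r) (tarcs A0 r) (torig o0 att) (tterm t0 att) (tinv inv0) p"
proof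
  fix a assume "a \<in> tarcs A0 r"
  then show "tinv inv0 a \<in> tarcs A0 r" and "tinv inv0 (tinv inv0 a) = a"
    and "torig o0 att (tinv inv0 a) = tterm t0 att a"
    using G0_inv by (cases a; auto simp: tarcs_def)+
  show "torig o0 att a \<in> tverts V0 r"
    using \<open>a \<in> tarcs A0 r\<close> G0_orig att_in by (cases a) (auto simp: tarcs_def tverts_def tv_def)
  show "0 < p a"
    using \<open>a \<in> tarcs A0 r\<close> p_pos by blast
qed (use p_stoch in blast)

lemma In_in_tarcs: "j < r \<Longrightarrow> In j k \<in> tarcs A0 r"
  by (simp add: tarcs_def)

lemma Old_image_subset_tarcs: "Old ` A0 \<subseteq> tarcs A0 r"
  by (auto simp: tarcs_def)

lemma tinv_image_Old:
  assumes "\<forall>a\<in>A0. inv0 a \<in> A0 \<and> inv0 (inv0 a) = a"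
  shows "tinv inv0 ` Old ` A0 = Old ` A0"
  using assms by (force simp: image_image)

theorem theorem3p5:
  fixes V0 :: "'v set" and A0 :: "'a set"
    and o0 t0 :: "'a \<Rightarrow> 'v" and inv0 :: "'a \<Rightarrow> 'a"
    and r :: nat and att :: "nat \<Rightarrow> 'v"
    and p :: "'a tarc \<Rightarrow> real"
    and \<alpha> :: "nat \<Rightarrow> complex"
    and \<Psi>inf :: "'a tarc \<Rightarrow> complex"
  assumes finV0: "finite V0" and finA0: "finite A0"
    and G0_orig: "\<forall>a\<in>A0. o0 a \<in> V0" and G0_term: "\<forall>a\<in>A0. t0 a \<in> V0"
    and G0_inv: "\<forall>a\<in>A0. inv0 a \<in> A0 \<and> inv0 (inv0 a) = a \<and> inv0 a \<noteq> a
                     \<and> o0 (inv0 a) = t0 a \<and> t0 (inv0 a) = o0 a"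
    and r_pos: "r \<ge> 1"
    and att_in: "\<forall>j<r. att j \<in> V0"
    and p_range: "\<forall>a\<in>tarcs A0 r. 0 < p a \<and> p a \<le> 1"
    and p_stoch: "\<forall>u\<in>tverts V0 r. (\<Sum>a\<in>{a\<in>tarcs A0 r. torig o0 att a = u}. p a) = 1"
    and p_tail: "\<forall>j<r. \<forall>k. p (In j k) = 1/2 \<and> (k \<ge> 1 \<longrightarrow> p (Out j k) = 1/2)"
    and nonrev: "\<not> reversible (tverts V0 r) (tarcs A0 r) (torig o0 att) (tterm t0 att) (tinv inv0) p"
    and stationary: "\<forall>a. (\<lambda>n. ((szegedy (tarcs A0 r) (torig o0 att) (tterm t0 att) (tinv inv0) p) ^^ n)
                              (Psi0 \<alpha>) a) \<longlonglongrightarrow> \<Psi>inf a"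
  shows "(\<forall>j<r. \<Psi>inf (Out j 0) = - \<Psi>inf (In j 0))
     \<and> (\<forall>u\<in>tverts V0 r.
          (\<Sum>a\<in>{a\<in>tarcs A0 r. tterm t0 att a = u}.
              complex_of_real (sqrt (p (tinv inv0 a))) * \<Psi>inf a) = 0)
     \<and> (\<forall>a\<in>tarcs A0 r. \<Psi>inf (tinv inv0 a) = - \<Psi>inf a)
     \<and> (\<forall>\<phi> :: 'a tarc \<Rightarrow> complex.
          (\<forall>a\<in>tarcs A0 r. \<phi> a = cut (Old ` A0)
              (szegedy (tarcs A0 r) (torig o0 att) (tterm t0 att) (tinv inv0) p
                 (cut (Old ` A0) \<phi>)) a)
          \<longrightarrow> (\<Sum>\<^sub>\<infinity>a\<in>tarcs A0 r. cnj (\<phi> a) * \<Psi>inf a) = 0)"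
proof -
  interpret szegedy_walk "tverts V0 r" "tarcs A0 r" "torig o0 att" "tterm t0 att" "tinv inv0" p
    using G0_orig G0_inv att_in p_range p_stoch by (intro szegedy_walk_tailed) auto
  have fixed: "U \<Psi>inf a = \<Psi>inf a" for a
    using stationary fixed_point_of_limit by blast
  have antisym: "\<forall>a\<in>tarcs A0 r. \<Psi>inf (tinv inv0 a) = - \<Psi>inf a"
    using fixed_point_antisym[OF nonrev fixed] by blast
  moreover have "\<Psi>inf (Out j 0) = - \<Psi>inf (In j 0)" if "j < r" for j
    using antisym[rule_format, OF In_in_tarcs[OF that]] by simp
  moreover have "\<forall>u\<in>tverts V0 r. (\<Sum>a\<in>{a\<in>tarcs A0 r. tterm t0 att a = u}.
      complex_of_real (sqrt (p (tinv inv0 a))) * \<Psi>inf a) = 0"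
    using fixed_point_dA_eq_zero[OF nonrev fixed] unfolding dA_def by blast
  moreover have "(\<Sum>\<^sub>\<infinity>a\<in>tarcs A0 r. cnj (\<phi> a) * \<Psi>inf a) = 0"
    if "\<forall>a\<in>tarcs A0 r. \<phi> a = cut (Old ` A0) (U (cut (Old ` A0) \<phi>)) a" for \<phi>
    using G0_inv by (intro limit_orthogonal_to_restricted_fixed[OF nonrev finite_imageI[OF finA0]
        Old_image_subset_tarcs tinv_image_Old _ stationary[rule_format] that]) auto
  ultimately show ?thesis
    by blast
qed

end
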